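(* Let $u(x)=\dfrac{2}{f(x)}\exp\left(-\dfrac{x f(x)+x^2}{2}\right)$ for $0<x\le 1$. Then $u(x)<\sqrt{\pi/2}$ for all $x\in(0,1]$.
   Context: For $x\in(0,1]$, $f(x)$ denotes the unique number $y\in[1,\infty)$ with $x e^{-x^2/2}=y e^{-y^2/2}$ (this is well defined since $t\mapsto te^{-t^2/2}$ is strictly increasing on $(0,1)$, strictly decreasing on $(1,\infty)$ and tends to $0$ at $+\infty$). *)

theory Defs
  imports "HOL-Analysis.Analysis"
begin

definition f :: "real \<Rightarrow> real" where
  "f x = (THE y. y \<ge> 1 \<and> x * exp (-(x^2)/2) = y * exp (-(y^2)/2))"

definition u :: "real \<Rightarrow> real" where
  "u x = 2 / f x * exp (-(x * f x + x^2) / 2)"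

end

theory Submission
  imports Defs
begin

text \<open>
  Put phi t = t exp(-t^2/2) and y = f x, so that phi y = phi x \<le> x, and phi decreases on
  [1, \<infinity>). On a bracket lo \<le> y \<le> hi this gives x \<ge> phi hi, hence
  u x = 2/y exp(-(xy + x^2)/2) \<le> 2/lo exp(-(a lo + a^2)/2) for any rational a \<le> phi hi.
  Three brackets covering [1, 8/5], with both exponentials bounded by (1 \<plusminus> t/32)^32, give
  u x \<le> 5/4; for y \<ge> 8/5 already 2/y \<le> 5/4. Finally 5/4 < sqrt(pi/2) because pi > 25/8.
\<close>

definition phi :: "real \<Rightarrow> real" where
  "phi t = t * exp (-(t^2)/2)"

lemma has_real_derivative_phi: "(phi has_real_derivative (1 - t^2) * exp (-(t^2)/2)) (at t)"
  unfolding phi_def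
  by (auto intro!: derivative_eq_intros simp: algebra_simps power2_eq_square)

lemma isCont_phi: "isCont phi t"
  unfolding phi_def by (intro continuous_intros) auto

lemma continuous_on_phi: "continuous_on S phi"
  by (simp add: continuous_at_imp_continuous_on isCont_phi)

lemma phi_strict_mono:
  assumes "0 \<le> a" "a < b" "b \<le> 1"
  shows "phi a < phi b"
proof (rule DERIV_pos_imp_increasing_open[OF \<open>a < b\<close> _ continuous_on_phi])
  fix t assume "a < t" "t < b"
  then have "t^2 < 1"
    using assms by (simp add: abs_square_less_1)
  then show "\<exists>d. (phi has_real_derivative d) (at t) \<and> d > 0"
    using has_real_derivative_phi[of t] by (intro exI[of _ "(1 - t^2) * exp (-(t^2)/2)"]) simp
qed

lemma phi_strict_antimono:
  assumes "1 \<le> a" "a < b"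
  shows "phi b < phi a"
proof (rule DERIV_neg_imp_decreasing_open[OF \<open>a < b\<close> _ continuous_on_phi])
  fix t assume "a < t" "t < b"
  then have "1 < t^2"
    using assms by (simp add: one_less_power)
  then show "\<exists>d. (phi has_real_derivative d) (at t) \<and> d < 0"
    using has_real_derivative_phi[of t]
    by (intro exI[of _ "(1 - t^2) * exp (-(t^2)/2)"]) (simp add: mult_neg_pos)
qed

lemma phi_le_self: "0 \<le> t \<Longrightarrow> phi t \<le> t"
  unfolding phi_def by (simp add: mult_left_le)

lemma phi_ge_one_minus_over_n_power_n:
  assumes "0 \<le> t" "n > 0" "t^2 \<le> 2 * n"
  shows "t * (1 - t^2 / (2 * n)) ^ n \<le> phi t"
proof -
  have "(1 - (t^2/2) / n) ^ n \<le> exp (-(t^2/2))"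
    using assms by (intro exp_ge_one_minus_x_over_n_power_n) auto
  then show ?thesis
    unfolding phi_def using assms(1) by (intro mult_left_mono) (auto simp: field_simps)
qed

lemma phi_le_two_div: "0 < M \<Longrightarrow> phi M \<le> 2 / M"
proof -
  assume "0 < M"
  have "M^2/2 \<le> exp (M^2/2)"
    using exp_ge_add_one_self[of "M^2/2"] by linarith
  then have "M * (M^2/2) \<le> M * exp (M^2/2)"
    using \<open>0 < M\<close> by (intro mult_left_mono) auto
  then show ?thesis
    unfolding phi_def using \<open>0 < M\<close> by (simp add: exp_minus field_simps power2_eq_square)
qed

lemma phi_attains_ge_one:
  assumes "0 < x" "x \<le> 1"
  shows "\<exists>y\<ge>1. phi y = phi x"
proof -
  define M where "M = 4 / x"
  have "4 \<le> M"
    using assms unfolding M_def by (simp add: field_simps)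
  have "exp (-(1/2)) \<le> exp (-(x^2)/2)"
    using assms by (simp add: power_le_one)
  moreover have "1/2 \<le> exp (-(1/2::real))"
    using exp_ge_add_one_self[of "-(1/2)"] by simp
  ultimately have "1/2 \<le> exp (-(x^2)/2)"
    by linarith
  then have "x * (1/2) \<le> phi x"
    unfolding phi_def using \<open>0 < x\<close> by (intro mult_left_mono) auto
  moreover have "phi M \<le> x / 2"
    using phi_le_two_div[of M] assms unfolding M_def by simp
  moreover have "phi x \<le> phi 1"
    using phi_strict_mono[of x 1] assms by (cases "x = 1") auto
  ultimately show ?thesis
    using IVT2[of phi M "phi x" 1] isCont_phi \<open>4 \<le> M\<close> by force
qed

lemma f_ge_one_and_phi_eq:
  assumes "0 < x" "x \<le> 1"
  shows "1 \<le> f x \<and> phi (f x) = phi x"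
proof -
  have "\<exists>!y. 1 \<le> y \<and> phi x = phi y"
    using phi_attains_ge_one[OF assms] phi_strict_antimono
    by (metis linorder_neqE_linordered_idom order_less_irrefl)
  then have "1 \<le> f x \<and> phi x = phi (f x)"
    unfolding f_def phi_def by (rule theI')
  then show ?thesis
    by simp
qed

lemma exp_neg_le_inverse_power:
  assumes "0 \<le> d" "n > 0"
  shows "exp (-d) \<le> 1 / (1 + d / n) ^ n"
proof -
  have "(1 + d / n) ^ n \<le> exp d"
    using assms by (intro exp_ge_one_plus_x_over_n_power_n) auto
  moreover have "0 < (1 + d / n) ^ n"
    using assms by (simp add: add_pos_nonneg)
  ultimately have "1 / exp d \<le> 1 / (1 + d / n) ^ n"
    by (intro divide_left_mono) auto
  then show ?thesis
    by (simp add: exp_minus inverse_eq_divide)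
qed

lemma u_le_on_bracket:
  assumes "0 < x" "x \<le> 1" "1 \<le> lo" "lo \<le> f x" "f x \<le> hi" "0 \<le> a" "a \<le> phi hi"
  shows "u x \<le> 2 / lo * exp (-(a * lo + a^2) / 2)"
proof -
  define y where "y = f x"
  have y: "1 \<le> y" "phi y = phi x"
    using f_ge_one_and_phi_eq[OF assms(1,2)] unfolding y_def by auto
  have "a \<le> phi hi" by fact
  also have "\<dots> \<le> phi y"
    using phi_strict_antimono[of y hi] y assms unfolding y_def by fastforce
  also have "\<dots> \<le> x"
    using y phi_le_self \<open>0 < x\<close> by simp
  finally have "a \<le> x" .
  then have "a * lo + a^2 \<le> x * y + x^2"
    using assms unfolding y_def by (intro add_mono mult_mono power_mono) auto
  then have "exp (-(x * y + x^2) / 2) \<le> exp (-(a * lo + a^2) / 2)"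
    by simp
  moreover have "2 / y \<le> 2 / lo"
    using assms y unfolding y_def by (simp add: frac_le)
  ultimately show ?thesis
    unfolding u_def y_def[symmetric] using y \<open>1 \<le> lo\<close> by (intro mult_mono) auto
qed

lemma u_le_five_quarters_on_bracket:
  assumes "0 < x" "x \<le> 1" "1 \<le> lo" "lo \<le> f x" "f x \<le> hi" "hi^2 \<le> 64" "0 \<le> a"
    and "a \<le> hi * (1 - hi^2 / 64) ^ 32"
    and "2 \<le> 5/4 * lo * (1 + (a * lo + a^2) / 64) ^ 32"
  shows "u x \<le> 5/4"
proof -
  define d where "d = (a * lo + a^2) / 2"
  have "0 \<le> d"
    using assms unfolding d_def by simp
  have "a \<le> phi hi"
    using assms phi_ge_one_minus_over_n_power_n[of hi 32] by simp
  then have "u x \<le> 2 / lo * exp (-d)"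
    using u_le_on_bracket assms unfolding d_def by (simp add: minus_divide_left)
  also have "\<dots> \<le> 2 / lo * (1 / (1 + d / 32) ^ 32)"
    using exp_neg_le_inverse_power[OF \<open>0 \<le> d\<close>, of 32] assms by (intro mult_left_mono) auto
  also have "\<dots> \<le> 5/4"
    using assms \<open>0 \<le> d\<close> unfolding d_def by (simp add: field_simps)
  finally show ?thesis .
qed

lemma u_le_five_quarters:
  assumes "0 < x" "x \<le> 1"
  shows "u x \<le> 5/4"
proof -
  have y: "1 \<le> f x"
    using f_ge_one_and_phi_eq[OF assms] by simp
  consider "f x \<le> 11/10" | "11/10 \<le> f x" "f x \<le> 7/5" | "7/5 \<le> f x" "f x \<le> 8/5" | "8/5 \<le> f x"
    by linarith
  then show ?thesis
  proof cases
    case 1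
    show ?thesis
      by (rule u_le_five_quarters_on_bracket[OF assms, where lo=1 and hi="11/10" and a="597/1000"])
        (use 1 y in \<open>simp_all add: power_divide\<close>)
  next
    case 2
    show ?thesis
      by (rule u_le_five_quarters_on_bracket[OF assms, where lo="11/10" and hi="7/5" and a="1/2"])
        (use 2 in \<open>simp_all add: power_divide\<close>)
  next
    case 3
    show ?thesis
      by (rule u_le_five_quarters_on_bracket[OF assms, where lo="7/5" and hi="8/5" and a="2/5"])
        (use 3 in \<open>simp_all add: power_divide\<close>)
  next
    case 4
    have "0 \<le> x * f x + x^2"
      using assms y by simp
    then have "exp (-(x * f x + x^2) / 2) \<le> 1"
      by simp
    moreover have "2 / f x \<le> 5/4"
      using 4 by (simp add: field_simps)
    ultimately show ?thesis
      unfolding u_def using y mult_mono[of "2 / f x" "5/4" "exp _" 1] by simp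
  qed
qed

theorem lemma3p4:
  fixes x :: real
  assumes "0 < x" and "x \<le> 1"
  shows "u x < sqrt (pi / 2)"
proof -
  have "(5/4::real)^2 < pi / 2"
    using pi_approx by (simp add: power_divide abs_le_iff)
  then have "5/4 < sqrt (pi / 2)"
    by (rule real_less_rsqrt)
  with u_le_five_quarters[OF assms] show ?thesis
    by linarith
qed

end
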